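(* Let $\Omega\subset\mathbb R^n$ be a nonempty open bounded set, $\eta:=\frac{2}{n+1}\cdot\frac{\mathscr H^{n-1}(\mathcal B^{n-1}_1)}{\mathscr H^n(\mathcal B^n_1)}$, and $0<\delta\le1$. Define $\Psi(\mathbf x):=\{\mathbf y\in\mathcal B_\delta(\mathbf x):(\mathbf y-\mathbf x)\cdot\mathbf e_1>0\}$ for $\mathbf x\in\Omega$ and $\Gamma:=\overline{\bigcup_{\mathbf x\in\Omega}\Psi(\mathbf x)}\setminus\Omega$. If $u\in L^1(\Omega\cup\Gamma)$ and $u=0$ a.e. on $\Gamma$, then $$\|u\|^2_{L^2(\Omega)}\le\frac{4(1+\operatorname{diam}\Omega)^3}{\eta^2}\int_\Omega\Big|\frac{1}{|\Psi(\mathbf x)|}\int_{\Psi(\mathbf x)}\frac{u(\mathbf y)-u(\mathbf x)}{\delta}\,d\mathbf y\Big|^2d\mathbf x.$$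
   Context: $\mathcal B_\delta(\mathbf x)$ is the open ball of radius $\delta$ about $\mathbf x$; $\mathcal B^k_1$ is the unit ball of $\mathbb R^k$; $\mathscr H^s$ is Hausdorff measure; $\mathbf e_1$ the first coordinate vector. *)

theory Defs
  imports "HOL-Analysis.Analysis"
begin

text \<open>First coordinate vector of real^'n; the index type is well-ordered so that
  "first" coordinate is its least element.\<close>
definition e1 :: "real ^ ('n::{finite,wellorder})" where
  "e1 = axis (LEAST i::'n. True) 1"

text \<open>eta = 2/(n+1) * H^{n-1}(B^{n-1}_1) / H^n(B^n_1); the library's unit_ball_vol k is
  the volume (= k-dim Hausdorff measure) of the unit ball of R^k.\<close>
definition eta_const :: "nat \<Rightarrow> real" where
  "eta_const n = 2 / (real n + 1) * unit_ball_vol (real n - 1) / unit_ball_vol (real n)"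

definition Psi :: "real \<Rightarrow> real ^ ('n::{finite,wellorder}) \<Rightarrow> (real ^ ('n::{finite,wellorder})) set" where
  "Psi \<delta> x = {y \<in> ball x \<delta>. (y - x) \<bullet> e1 > 0}"

definition Gamma :: "real \<Rightarrow> (real ^ ('n::{finite,wellorder})) set \<Rightarrow> (real ^ ('n::{finite,wellorder})) set" where
  "Gamma \<delta> \<Omega> = closure (\<Union>x\<in>\<Omega>. Psi \<delta> x) - \<Omega>"

end

theory Submission
  imports Defs
begin

text \<open>Choose \<open>c\<close> so that the weight \<open>\<phi> x = x \<bullet> e1 - c\<close> satisfies \<open>\<delta> \<le> \<phi> \<le> L = 1 + diameter \<Omega>\<close>
  on \<open>\<Omega>\<close>, and let \<open>v\<close> be a Borel representative of \<open>u\<close> vanishing off \<open>\<Omega>\<close>. Integrating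
  the pointwise bound \<open>v\<^sup>2 \<le> avg (v\<^sup>2) + 2 \<bar>v\<bar> \<bar>v - avg v\<bar>\<close> against \<open>\<phi>\<close> and exchanging the order
  of integration, the average over the translated half balls \<open>Psi \<delta> x\<close> lowers the weight by the
  mean height of \<open>Psi \<delta> 0\<close>, which is at least \<open>\<eta> \<delta>\<close>. Hence
  \<open>\<eta> \<delta> \<parallel>v\<parallel>\<^sup>2 \<le> \<integral> 2 \<phi> \<bar>v\<bar> \<bar>v - avg v\<bar>\<close>, and absorbing half of the left-hand side by
  AM-GM leaves \<open>\<parallel>v\<parallel>\<^sup>2 \<le> 4 L\<^sup>2 / \<eta>\<^sup>2 \<parallel>(avg v - v) / \<delta>\<parallel>\<^sup>2\<close>. Since \<open>u = 0\<close> on \<open>\<Gamma>\<close>,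
  the averages of \<open>u\<close> over half balls centred in \<open>\<Omega>\<close> are those of \<open>v\<close>.\<close>

section \<open>Integrals on Euclidean space\<close>

lemma nn_integral_lborel_affine:
  fixes f :: "'a::euclidean_space \<Rightarrow> ennreal"
  assumes [measurable]: "f \<in> borel_measurable borel" and "c \<noteq> 0"
  shows "(\<integral>\<^sup>+x. f x \<partial>lborel) = ennreal (\<bar>c\<bar> ^ DIM('a)) * (\<integral>\<^sup>+x. f (t + c *\<^sub>R x) \<partial>lborel)"
  by (subst lborel_affine[OF \<open>c \<noteq> 0\<close>, of t])
     (simp add: nn_integral_density nn_integral_distr nn_integral_cmult)

lemma nn_integral_lborel_translate:
  fixes f :: "'a::euclidean_space \<Rightarrow> ennreal"
  assumes "f \<in> borel_measurable borel"
  shows "(\<integral>\<^sup>+y. f (y - x) \<partial>lborel) = (\<integral>\<^sup>+y. f y \<partial>lborel)"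
  using nn_integral_lborel_affine[OF assms, of 1 "- x"] by simp

lemma nn_integral_lborel_reflect:
  fixes f :: "'a::euclidean_space \<Rightarrow> ennreal"
  assumes "f \<in> borel_measurable borel"
  shows "(\<integral>\<^sup>+y. f (x - y) \<partial>lborel) = (\<integral>\<^sup>+y. f y \<partial>lborel)"
  using nn_integral_lborel_affine[OF assms, of "- 1" x] by simp

lemma nn_integral_lborel_PiM_Basis:
  fixes f :: "'a::euclidean_space \<Rightarrow> ennreal"
  assumes "f \<in> borel_measurable borel"
  shows "(\<integral>\<^sup>+z. f z \<partial>lborel) = (\<integral>\<^sup>+g. f (\<Sum>b\<in>Basis. g b *\<^sub>R b) \<partial>Pi\<^sub>M Basis (\<lambda>_. lborel))"
  using assms by (subst lborel_eq, subst nn_integral_distr) (auto cong: measurable_cong_sets)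

lemma has_integral_times_sqrt_power:
  fixes r :: real and k :: nat
  assumes "0 < r"
  shows "((\<lambda>y. y * sqrt (r\<^sup>2 - y\<^sup>2) ^ k) has_integral r ^ (k + 2) / (k + 2)) {0..r}"
proof -
  define F where "F y = - (sqrt (r\<^sup>2 - y\<^sup>2) ^ (k + 2)) / (k + 2)" for y
  have "continuous_on {0..r} F"
    unfolding F_def by (intro continuous_intros) auto
  moreover have "(F has_vector_derivative y * sqrt (r\<^sup>2 - y\<^sup>2) ^ k) (at y)" if "y \<in> {0<..<r}" for y
  proof -
    let ?s = "sqrt (r\<^sup>2 - y\<^sup>2)"
    have "0 < r\<^sup>2 - y\<^sup>2"
      using that by (simp add: power_strict_mono)
    then have "0 < ?s"
      by simp
    have "((\<lambda>y. sqrt (r\<^sup>2 - y\<^sup>2)) has_real_derivative - y / ?s) (at y)"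
      using \<open>0 < r\<^sup>2 - y\<^sup>2\<close> \<open>0 < ?s\<close>
      by (auto intro!: derivative_eq_intros simp: field_simps)
    from DERIV_chain2[OF DERIV_pow[of "k + 2" ?s] this]
    have "(F has_real_derivative - (real (k + 2) * ?s ^ (k + 2 - Suc 0) * (- y / ?s)) / (k + 2)) (at y)"
      unfolding F_def by (intro DERIV_cdivide DERIV_minus)
    also have "- (real (k + 2) * ?s ^ (k + 2 - Suc 0) * (- y / ?s)) / (k + 2) = y * ?s ^ k"
      using \<open>0 < ?s\<close> by (simp add: divide_simps del: of_nat_add)
    finally show ?thesis
      by (simp add: has_real_derivative_iff_has_vector_derivative)
  qed
  ultimately have "((\<lambda>y. y * sqrt (r\<^sup>2 - y\<^sup>2) ^ k) has_integral F r - F 0) {0..r}"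
    using assms by (intro fundamental_theorem_of_calculus_interior) auto
  moreover have "F r - F 0 = r ^ (k + 2) / (k + 2)"
    using assms by (simp add: F_def power_mult[symmetric])
  ultimately show ?thesis
    by simp
qed

lemma nn_integral_cball_inner_Basis_slices:
  fixes e :: "'a::euclidean_space" and r :: real
  defines "A \<equiv> Basis - {e}"
  assumes e: "e \<in> Basis" and "0 < r"
  shows "(\<integral>\<^sup>+z. indicator (cball 0 r) z * ennreal (z \<bullet> e) \<partial>lborel)
    = (\<integral>\<^sup>+y. ennreal y * indicator {-r..r} y * emeasure (Pi\<^sub>M A (\<lambda>_. lborel))
        ({f. sqrt (\<Sum>i\<in>A. (f i)\<^sup>2) \<le> sqrt (r\<^sup>2 - y\<^sup>2)} \<inter> space (Pi\<^sub>M A (\<lambda>_. lborel))) \<partial>lborel)"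
proof -
  interpret product_sigma_finite "\<lambda>_. lborel"
    by standard
  let ?M = "\<lambda>I. Pi\<^sub>M I (\<lambda>_::'a. lborel :: real measure)"
  let ?B = "\<lambda>I. {f. sqrt (\<Sum>i\<in>I. (f i)\<^sup>2) \<le> r} \<inter> space (?M I)"
  have A: "finite A" "e \<notin> A" "insert e A = Basis"
    using e by (auto simp: A_def)
  have coord: "(\<Sum>b\<in>Basis. f b *\<^sub>R b) \<bullet> e = f e" for f :: "'a \<Rightarrow> real"
    using e by (simp add: inner_sum_left inner_Basis if_distrib cong: if_cong)
  have norm: "norm (\<Sum>b\<in>Basis. f b *\<^sub>R b) = sqrt (\<Sum>i\<in>Basis. (f i)\<^sup>2)" for f :: "'a \<Rightarrow> real"
    using euclidean_dist_l2[of 0 "\<Sum>b\<in>Basis. f b *\<^sub>R b"]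
    by (simp add: L2_set_def inner_sum_left inner_Basis if_distrib cong: if_cong)
  have [measurable]: "cball (0 :: 'a) r \<in> sets borel"
    by simp
  have "(\<integral>\<^sup>+z. indicator (cball 0 r) z * ennreal (z \<bullet> e) \<partial>lborel)
      = (\<integral>\<^sup>+g. indicator (cball 0 r) (\<Sum>b\<in>Basis. g b *\<^sub>R b) * ennreal ((\<Sum>b\<in>Basis. g b *\<^sub>R b) \<bullet> e) \<partial>?M Basis)"
    by (rule nn_integral_lborel_PiM_Basis) measurable
  also have "\<dots> = (\<integral>\<^sup>+f. indicator (?B (insert e A)) f * ennreal (f e) \<partial>?M (insert e A))"
    unfolding A(3) by (intro nn_integral_cong) (simp add: coord norm indicator_def)
  also have "\<dots> = (\<integral>\<^sup>+y. \<integral>\<^sup>+x. indicator (?B (insert e A)) (x(e := y)) * ennreal y \<partial>?M A \<partial>lborel)"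
  proof (subst product_nn_integral_insert_rev)
    have [measurable]: "(\<lambda>f. f i) \<in> ?M (insert e A) \<rightarrow>\<^sub>M lborel" if "i \<in> insert e A" for i
      using that by (rule measurable_component_singleton)
    have [measurable]: "?B (insert e A) \<in> sets (?M (insert e A))"
      by measurable
    show "(\<lambda>f. indicator (?B (insert e A)) f * ennreal (f e)) \<in> borel_measurable (?M (insert e A))"
      by measurable
  qed (use A in auto)
  also have "\<dots> = (\<integral>\<^sup>+y. \<integral>\<^sup>+x. ennreal y * indicator {-r..r} y
      * indicator ({f. sqrt (\<Sum>i\<in>A. (f i)\<^sup>2) \<le> sqrt (r\<^sup>2 - y\<^sup>2)} \<inter> space (?M A)) x \<partial>?M A \<partial>lborel)"
  proof (intro nn_integral_cong)
    fix y f
    assume "f \<in> space (?M A)"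
    have "(\<Sum>i\<in>A. ((f(e := y)) i)\<^sup>2) = (\<Sum>i\<in>A. (f i)\<^sup>2)"
      using A(2) by (intro sum.cong) auto
    then have "(\<Sum>i\<in>insert e A. ((f(e := y)) i)\<^sup>2) = y\<^sup>2 + (\<Sum>i\<in>A. (f i)\<^sup>2)"
      using A(1,2) by simp
    moreover have "y \<in> {-r..r}" if "y\<^sup>2 \<le> r\<^sup>2"
      using that \<open>0 < r\<close> by (auto simp: abs_le_square_iff[symmetric] abs_le_iff)
    moreover have "0 \<le> (\<Sum>i\<in>A. (f i)\<^sup>2)"
      by (simp add: sum_nonneg)
    ultimately show "indicator (?B (insert e A)) (f(e := y)) * ennreal y
        = ennreal y * indicator {-r..r} y
          * indicator ({f. sqrt (\<Sum>i\<in>A. (f i)\<^sup>2) \<le> sqrt (r\<^sup>2 - y\<^sup>2)} \<inter> space (?M A)) f"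
      using \<open>f \<in> space (?M A)\<close> \<open>0 < r\<close> A(2)
      by (auto simp: indicator_def real_sqrt_le_iff' space_PiM PiE_def)
  qed
  also have "\<dots> = (\<integral>\<^sup>+y. ennreal y * indicator {-r..r} y * emeasure (?M A)
      ({f. sqrt (\<Sum>i\<in>A. (f i)\<^sup>2) \<le> sqrt (r\<^sup>2 - y\<^sup>2)} \<inter> space (?M A)) \<partial>lborel)"
    using A by (intro nn_integral_cong) (simp add: nn_integral_cmult)
  finally show ?thesis .
qed

lemma nn_integral_cball_inner_Basis:
  fixes e :: "'a::euclidean_space" and r :: real
  assumes e: "e \<in> Basis" and r: "0 < r"
  shows "(\<integral>\<^sup>+z. indicator (cball 0 r) z * ennreal (z \<bullet> e) \<partial>lborel)
    = ennreal (unit_ball_vol (real (DIM('a) - 1)) * r ^ (DIM('a) + 1) / (DIM('a) + 1))"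
proof -
  define A where "A = Basis - {e}"
  define k where "k = DIM('a) - 1"
  have A: "finite A" "card A = k"
    using e by (simp_all add: A_def k_def card_Diff_singleton)
  have "DIM('a) = k + 1"
    using DIM_positive[where 'a='a] by (simp add: k_def)
  have "(\<integral>\<^sup>+z. indicator (cball 0 r) z * ennreal (z \<bullet> e) \<partial>lborel)
      = (\<integral>\<^sup>+y. ennreal y * indicator {-r..r} y * emeasure (Pi\<^sub>M A (\<lambda>_. lborel))
        ({f. sqrt (\<Sum>i\<in>A. (f i)\<^sup>2) \<le> sqrt (r\<^sup>2 - y\<^sup>2)} \<inter> space (Pi\<^sub>M A (\<lambda>_. lborel))) \<partial>lborel)"
    unfolding A_def by (rule nn_integral_cball_inner_Basis_slices[OF e r])
  also have "\<dots> = (\<integral>\<^sup>+y. ennreal (unit_ball_vol (real k) * (y * sqrt (r\<^sup>2 - y\<^sup>2) ^ k)) * indicator {0..r} y \<partial>lborel)"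
  proof (intro nn_integral_cong_AE)
    have "AE y in lborel. y \<notin> {-r, r}"
      by (intro AE_not_in countable_imp_null_set_lborel) auto
    then show "AE y in lborel. ennreal y * indicator {-r..r} y * emeasure (Pi\<^sub>M A (\<lambda>_. lborel))
        ({f. sqrt (\<Sum>i\<in>A. (f i)\<^sup>2) \<le> sqrt (r\<^sup>2 - y\<^sup>2)} \<inter> space (Pi\<^sub>M A (\<lambda>_. lborel)))
      = ennreal (unit_ball_vol (real k) * (y * sqrt (r\<^sup>2 - y\<^sup>2) ^ k)) * indicator {0..r} y"
    proof eventually_elim
      case (elim y)
      show ?case
      proof (cases "y \<in> {0<..<r}")
        case True
        then have "y\<^sup>2 < r\<^sup>2"
          by (simp add: power_strict_mono)
        then have "emeasure (Pi\<^sub>M A (\<lambda>_. lborel))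
            ({f. sqrt (\<Sum>i\<in>A. (f i)\<^sup>2) \<le> sqrt (r\<^sup>2 - y\<^sup>2)} \<inter> space (Pi\<^sub>M A (\<lambda>_. lborel)))
          = ennreal (unit_ball_vol (real k) * sqrt (r\<^sup>2 - y\<^sup>2) ^ k)"
          using A by (subst emeasure_cball_aux) auto
        then show ?thesis
          using True by (simp add: ennreal_mult'[symmetric] mult_ac indicator_def)
      next
        case False
        then show ?thesis
          using elim by (auto simp: indicator_def ennreal_neg mult_nonpos_nonneg)
      qed
    qed
  qed
  also have "\<dots> = ennreal (unit_ball_vol (real k) * (r ^ (k + 2) / (k + 2)))"
  proof (rule nn_integral_has_integral_lebesgue')
    show "((\<lambda>y. unit_ball_vol (real k) * (y * sqrt (r\<^sup>2 - y\<^sup>2) ^ k)) has_integral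
        unit_ball_vol (real k) * (r ^ (k + 2) / (k + 2))) {0..r}"
      by (rule has_integral_mult_right[OF has_integral_times_sqrt_power[OF r]])
  qed auto
  finally show ?thesis
    by (simp add: \<open>DIM('a) = k + 1\<close>)
qed

lemma nn_integral_lebesgue_on_eq_lborel:
  assumes "AE x in lebesgue. x \<in> \<Omega> \<longrightarrow> f x = g x"
  shows "(\<integral>\<^sup>+x\<in>\<Omega>. f x \<partial>lebesgue) = (\<integral>\<^sup>+x. indicator \<Omega> x * g x \<partial>lborel)"
proof -
  have "(\<integral>\<^sup>+x\<in>\<Omega>. f x \<partial>lebesgue) = (\<integral>\<^sup>+x. indicator \<Omega> x * g x \<partial>lebesgue)"
    using assms by (intro nn_integral_cong_AE) (auto simp: indicator_def elim!: eventually_mono)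
  also have "\<dots> = (\<integral>\<^sup>+x. indicator \<Omega> x * g x \<partial>lborel)"
    by (rule nn_integral_completion)
  finally show ?thesis .
qed

lemma set_integrable_Borel_representative:
  fixes u :: "'a::euclidean_space \<Rightarrow> real"
  assumes [measurable]: "\<Omega> \<in> sets borel" and "\<Omega> \<inter> \<Gamma> = {}"
    and "set_integrable lebesgue (\<Omega> \<union> \<Gamma>) u" and "AE y in lebesgue. y \<in> \<Gamma> \<longrightarrow> u y = 0"
  obtains v where "v \<in> borel_measurable borel" "\<And>x. x \<notin> \<Omega> \<Longrightarrow> v x = 0" "integrable lborel v"
    "AE x in lebesgue. x \<in> \<Omega> \<union> \<Gamma> \<longrightarrow> u x = v x"
proof -
  define f where "f x = indicator \<Omega> x * u x" for x
  have "integrable lebesgue (\<lambda>x. indicator (\<Omega> \<union> \<Gamma>) x * u x)"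
    using assms(3) by (simp add: set_integrable_def)
  then have "integrable lebesgue (\<lambda>x. indicator (\<Omega> \<union> \<Gamma>) x * u x * indicator \<Omega> x)"
    by (rule integrable_real_mult_indicator[rotated]) simp
  also have "(\<lambda>x. indicator (\<Omega> \<union> \<Gamma>) x * u x * indicator \<Omega> x) = f"
    by (auto simp: f_def indicator_def)
  finally have f: "integrable lebesgue f" .
  then obtain g where g: "g \<in> borel_measurable lborel" and "AE x in lborel. f x = g x"
    using completion_ex_borel_measurable_real[of f lborel] borel_measurable_integrable by blast
  from g have [measurable]: "g \<in> borel_measurable borel"
    by simp
  define v where "v x = indicator \<Omega> x * g x" for x
  have v [measurable]: "v \<in> borel_measurable borel"
    unfolding v_def[abs_def] by measurable
  have "AE x in lborel. f x = v x"
    using \<open>AE x in lborel. f x = g x\<close> by eventually_elim (auto simp: f_def v_def indicator_def)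
  then have fv: "AE x in lebesgue. f x = v x"
    by (simp add: AE_completion_iff)
  have "integrable lebesgue v"
    by (rule integrable_cong_AE_imp[OF f _ fv]) (simp add: measurable_completion)
  then have "integrable lborel v"
    by (simp add: integrable_completion)
  moreover have "AE x in lebesgue. x \<in> \<Omega> \<union> \<Gamma> \<longrightarrow> u x = v x"
    using fv assms(4) by eventually_elim (use assms(2) in \<open>auto simp: f_def v_def\<close>)
  moreover have "\<And>x. x \<notin> \<Omega> \<Longrightarrow> v x = 0"
    by (simp add: v_def)
  ultimately show ?thesis
    using that v by blast
qed

lemma bounded_inner_slab:
  fixes S :: "'a::euclidean_space set"
  assumes "bounded S" "S \<noteq> {}" "norm e \<le> 1"
  obtains m where "\<And>y. y \<in> S \<Longrightarrow> m \<le> y \<bullet> e \<and> y \<bullet> e \<le> m + diameter S"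
proof
  let ?m = "Inf ((\<lambda>y. y \<bullet> e) ` S)"
  have inner_le: "\<bar>y \<bullet> e\<bar> \<le> norm y" for y
    using Cauchy_Schwarz_ineq2[of y e] assms(3) mult_left_le[of "norm e" "norm y"] by simp
  have bdd: "bdd_below ((\<lambda>y. y \<bullet> e) ` S)"
  proof -
    obtain B where "\<And>y. y \<in> S \<Longrightarrow> norm y \<le> B"
      using assms(1) by (auto simp: bounded_iff)
    then have "- B \<le> y \<bullet> e" if "y \<in> S" for y
      using inner_le[of y] that by (force simp: abs_le_iff)
    then show ?thesis
      by (intro bdd_belowI[of _ "- B"]) blast
  qed
  fix y assume "y \<in> S"
  show "?m \<le> y \<bullet> e \<and> y \<bullet> e \<le> ?m + diameter S"
  proof
    show "?m \<le> y \<bullet> e"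
      using \<open>y \<in> S\<close> bdd by (simp add: cInf_lower)
    have "y \<bullet> e - diameter S \<le> z \<bullet> e" if "z \<in> S" for z
    proof -
      have "y \<bullet> e - z \<bullet> e \<le> norm (y - z)"
        using inner_le[of "y - z"] by (simp add: inner_diff_left)
      also have "\<dots> \<le> diameter S"
        using diameter_bounded_bound[OF assms(1) \<open>y \<in> S\<close> that] by (simp add: dist_norm)
      finally show ?thesis
        by simp
    qed
    then have "y \<bullet> e - diameter S \<le> ?m"
      using assms(2) by (intro cInf_greatest) auto
    then show "y \<bullet> e \<le> ?m + diameter S"
      by simp
  qed
qed

lemma square_le_set_average:
  fixes f :: "'a \<Rightarrow> real"
  assumes A [measurable]: "A \<in> sets M" and pos: "0 < measure M A"
    and f: "integrable M f" and f2: "integrable M (\<lambda>y. (f y)\<^sup>2)"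
  shows "t\<^sup>2 \<le> (\<integral>y. indicator A y * (f y)\<^sup>2 \<partial>M) / measure M A
      + 2 * \<bar>t\<bar> * \<bar>t - (\<integral>y. indicator A y * f y \<partial>M) / measure M A\<bar>"
proof -
  define m where "m = measure M A"
  define I1 where "I1 = (\<integral>y. indicator A y * f y \<partial>M)"
  define I2 where "I2 = (\<integral>y. indicator A y * (f y)\<^sup>2 \<partial>M)"
  have "emeasure M A \<noteq> \<infinity>"
    using pos by (auto simp: measure_def)
  then have i0: "integrable M (\<lambda>y. indicator A y :: real)"
    by (simp add: less_top)
  have i1: "integrable M (\<lambda>y. indicator A y * f y)" and i2: "integrable M (\<lambda>y. indicator A y * (f y)\<^sup>2)"
    using integrable_real_mult_indicator[OF A f] integrable_real_mult_indicator[OF A f2]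
    by (simp_all add: mult.commute)
  have "(\<lambda>y. indicator A y * (f y - t)\<^sup>2) =
      (\<lambda>y. indicator A y * (f y)\<^sup>2 - 2 * t * (indicator A y * f y) + t\<^sup>2 * indicator A y)"
    by (simp add: fun_eq_iff power2_eq_square algebra_simps)
  moreover have "0 \<le> (\<integral>y. indicator A y * (f y - t)\<^sup>2 \<partial>M)"
    by (rule integral_nonneg_AE) auto
  ultimately have "0 \<le> I2 - 2 * t * I1 + t\<^sup>2 * m"
    using i0 i1 i2 by (simp add: integral_diff integral_add I1_def I2_def m_def)
  then have "0 \<le> (I2 - 2 * t * I1 + t\<^sup>2 * m) / m"
    using pos by (simp add: m_def)
  also have "\<dots> = I2 / m - 2 * t * (I1 / m) + t\<^sup>2"
    using pos by (simp add: m_def diff_divide_distrib add_divide_distrib)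
  finally have "t\<^sup>2 \<le> I2 / m + 2 * t * (t - I1 / m)"
    by (simp add: algebra_simps power2_eq_square)
  also have "2 * t * (t - I1 / m) \<le> 2 * \<bar>t\<bar> * \<bar>t - I1 / m\<bar>"
    by (metis abs_ge_self abs_mult abs_numeral mult.assoc)
  finally show ?thesis
    by (simp add: I1_def I2_def m_def)
qed

lemma weighted_cross_term_le:
  fixes p L a t d :: real
  assumes "0 \<le> p" "p \<le> L" "0 < a"
  shows "p * (2 * \<bar>t\<bar> * \<bar>d\<bar>) \<le> a / 2 * t\<^sup>2 + 2 * L\<^sup>2 / a * d\<^sup>2"
proof -
  have "p * (2 * \<bar>t\<bar> * \<bar>d\<bar>) \<le> 2 * L * \<bar>t\<bar> * \<bar>d\<bar>"
    using assms by (simp add: mult_right_mono)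
  also have "\<dots> \<le> a / 2 * t\<^sup>2 + 2 * L\<^sup>2 / a * d\<^sup>2"
  proof -
    have "0 \<le> (a * \<bar>t\<bar> - 2 * L * \<bar>d\<bar>)\<^sup>2"
      by simp
    then have "2 * a * (2 * L * \<bar>t\<bar> * \<bar>d\<bar>) \<le> 2 * a * (a / 2 * t\<^sup>2 + 2 * L\<^sup>2 / a * d\<^sup>2)"
      using \<open>0 < a\<close> by (simp add: power2_eq_square algebra_simps)
    then show ?thesis
      using \<open>0 < a\<close> by simp
  qed
  finally show ?thesis .
qed

lemma ennreal_absorb_half:
  fixes F G T :: ennreal
  assumes "T + ennreal a * F \<le> T + (ennreal (a / 2) * F + ennreal b * G)"
    and "T < \<infinity>" "F < \<infinity>" "G < \<infinity>" "0 < a" "0 \<le> b"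
  shows "F \<le> ennreal (2 * b / a) * G"
proof -
  obtain f g where f: "F = ennreal f" "0 \<le> f" and g: "G = ennreal g" "0 \<le> g"
    using assms(3,4) by (cases F; cases G) auto
  have "ennreal a * F \<le> ennreal (a / 2) * F + ennreal b * G"
    using assms(1,2) by (auto simp: ennreal_add_left_cancel_le)
  then have "a * f \<le> a / 2 * f + b * g"
    using f g assms(5,6) by (simp add: ennreal_mult'[symmetric] flip: ennreal_plus)
  then have "f \<le> 2 * b / a * g"
    using assms(5) by (simp add: field_simps)
  then show ?thesis
    using f g assms(5,6) by (simp add: ennreal_mult'[symmetric] ennreal_leI)
qed

lemma nn_integral_square_finite:
  fixes v A :: "'a \<Rightarrow> real"
  assumes [measurable]: "v \<in> borel_measurable M" "A \<in> borel_measurable M" "\<Omega> \<in> sets M"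
    and "emeasure M \<Omega> < \<infinity>" "\<And>x. \<bar>A x\<bar> \<le> B" "\<delta> \<noteq> 0"
    and "(\<integral>\<^sup>+x. indicator \<Omega> x * ennreal (((A x - v x) / \<delta>)\<^sup>2) \<partial>M) < \<infinity>"
  shows "(\<integral>\<^sup>+x. indicator \<Omega> x * ennreal ((v x)\<^sup>2) \<partial>M) < \<infinity>"
proof -
  have "(\<integral>\<^sup>+x. indicator \<Omega> x * ennreal ((v x)\<^sup>2) \<partial>M)
      \<le> (\<integral>\<^sup>+x. ennreal (2 * B\<^sup>2) * indicator \<Omega> x
          + ennreal (2 * \<delta>\<^sup>2) * (indicator \<Omega> x * ennreal (((A x - v x) / \<delta>)\<^sup>2)) \<partial>M)"
  proof (intro nn_integral_mono)
    fix x
    have "(v x)\<^sup>2 \<le> 2 * (A x)\<^sup>2 + 2 * (A x - v x)\<^sup>2"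
      using zero_le_power2[of "A x + (A x - v x)"] by (simp add: power2_eq_square algebra_simps)
    also have "(A x)\<^sup>2 \<le> B\<^sup>2"
      using power_mono[OF assms(5)[of x] abs_ge_zero, of 2] by simp
    also have "(A x - v x)\<^sup>2 = \<delta>\<^sup>2 * ((A x - v x) / \<delta>)\<^sup>2"
      using \<open>\<delta> \<noteq> 0\<close> by (simp add: power_divide)
    finally have "ennreal ((v x)\<^sup>2) \<le> ennreal (2 * B\<^sup>2) + ennreal (2 * \<delta>\<^sup>2) * ennreal (((A x - v x) / \<delta>)\<^sup>2)"
      by (simp add: ennreal_leI flip: ennreal_plus ennreal_mult')
    then show "indicator \<Omega> x * ennreal ((v x)\<^sup>2) \<le> ennreal (2 * B\<^sup>2) * indicator \<Omega> x
        + ennreal (2 * \<delta>\<^sup>2) * (indicator \<Omega> x * ennreal (((A x - v x) / \<delta>)\<^sup>2))"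
      by (cases "x \<in> \<Omega>") auto
  qed
  also have "\<dots> = ennreal (2 * B\<^sup>2) * emeasure M \<Omega>
      + ennreal (2 * \<delta>\<^sup>2) * (\<integral>\<^sup>+x. indicator \<Omega> x * ennreal (((A x - v x) / \<delta>)\<^sup>2) \<partial>M)"
    by (simp add: nn_integral_add nn_integral_cmult)
  also have "\<dots> < \<infinity>"
    using assms(4,7) by (simp add: ennreal_mult_less_top)
  finally show ?thesis .
qed

lemma nn_integral_weight_split:
  fixes v \<phi> :: "'a \<Rightarrow> real"
  assumes [measurable]: "v \<in> borel_measurable M" "\<phi> \<in> borel_measurable M" "\<Omega> \<in> sets M"
    and "\<And>x. x \<notin> \<Omega> \<Longrightarrow> v x = 0" "\<And>x. x \<in> \<Omega> \<Longrightarrow> b \<le> \<phi> x" "0 \<le> b"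
  shows "(\<integral>\<^sup>+x. ennreal (\<phi> x) * ennreal ((v x)\<^sup>2) \<partial>M)
    = (\<integral>\<^sup>+x. ennreal ((v x)\<^sup>2) * ennreal (\<phi> x - b) \<partial>M)
      + ennreal b * (\<integral>\<^sup>+x. indicator \<Omega> x * ennreal ((v x)\<^sup>2) \<partial>M)"
proof -
  have "(\<integral>\<^sup>+x. ennreal (\<phi> x) * ennreal ((v x)\<^sup>2) \<partial>M)
      = (\<integral>\<^sup>+x. ennreal ((v x)\<^sup>2) * ennreal (\<phi> x - b) + ennreal b * (indicator \<Omega> x * ennreal ((v x)\<^sup>2)) \<partial>M)"
  proof (intro nn_integral_cong)
    fix x
    show "ennreal (\<phi> x) * ennreal ((v x)\<^sup>2)
        = ennreal ((v x)\<^sup>2) * ennreal (\<phi> x - b) + ennreal b * (indicator \<Omega> x * ennreal ((v x)\<^sup>2))"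
    proof (cases "x \<in> \<Omega>")
      case True
      then have "ennreal (\<phi> x) = ennreal (\<phi> x - b) + ennreal b"
        using assms(5,6) by (simp flip: ennreal_plus)
      then show ?thesis
        using True by (simp add: distrib_left mult.commute)
    qed (simp add: assms(4))
  qed
  also have "\<dots> = (\<integral>\<^sup>+x. ennreal ((v x)\<^sup>2) * ennreal (\<phi> x - b) \<partial>M)
      + ennreal b * (\<integral>\<^sup>+x. indicator \<Omega> x * ennreal ((v x)\<^sup>2) \<partial>M)"
    by (simp add: nn_integral_add nn_integral_cmult)
  finally show ?thesis .
qed

lemma nn_integral_square_weight_le:
  fixes v \<phi> :: "'a \<Rightarrow> real"
  assumes [measurable]: "v \<in> borel_measurable M" "\<Omega> \<in> sets M"
    and "\<And>x. x \<notin> \<Omega> \<Longrightarrow> v x = 0" "\<And>x. x \<in> \<Omega> \<Longrightarrow> \<phi> x \<le> L"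
  shows "(\<integral>\<^sup>+x. ennreal ((v x)\<^sup>2) * ennreal (\<phi> x) \<partial>M)
    \<le> ennreal L * (\<integral>\<^sup>+x. indicator \<Omega> x * ennreal ((v x)\<^sup>2) \<partial>M)"
proof -
  have "(\<integral>\<^sup>+x. ennreal ((v x)\<^sup>2) * ennreal (\<phi> x) \<partial>M)
      \<le> (\<integral>\<^sup>+x. ennreal L * (indicator \<Omega> x * ennreal ((v x)\<^sup>2)) \<partial>M)"
  proof (intro nn_integral_mono)
    fix x
    show "ennreal ((v x)\<^sup>2) * ennreal (\<phi> x) \<le> ennreal L * (indicator \<Omega> x * ennreal ((v x)\<^sup>2))"
    proof (cases "x \<in> \<Omega>")
      case True
      then have "ennreal ((v x)\<^sup>2) * ennreal (\<phi> x) \<le> ennreal ((v x)\<^sup>2) * ennreal L"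
        using assms(4) by (intro mult_left_mono ennreal_leI) auto
      then show ?thesis
        using True by (simp add: mult.commute)
    qed (simp add: assms(3))
  qed
  also have "\<dots> = ennreal L * (\<integral>\<^sup>+x. indicator \<Omega> x * ennreal ((v x)\<^sup>2) \<partial>M)"
    by (simp add: nn_integral_cmult)
  finally show ?thesis .
qed

lemma nn_integral_cross_term_le:
  fixes v A \<phi> :: "'a \<Rightarrow> real"
  assumes [measurable]: "v \<in> borel_measurable M" "A \<in> borel_measurable M" "\<Omega> \<in> sets M"
    and "\<And>x. x \<notin> \<Omega> \<Longrightarrow> v x = 0" "\<And>x. x \<in> \<Omega> \<Longrightarrow> 0 \<le> \<phi> x \<and> \<phi> x \<le> L"
    and "0 < a" "0 < \<delta>"
  shows "(\<integral>\<^sup>+x. ennreal (\<phi> x * (2 * \<bar>v x\<bar> * \<bar>v x - A x\<bar>)) \<partial>M)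
    \<le> ennreal (a / 2) * (\<integral>\<^sup>+x. indicator \<Omega> x * ennreal ((v x)\<^sup>2) \<partial>M)
      + ennreal (2 * L\<^sup>2 * \<delta>\<^sup>2 / a) * (\<integral>\<^sup>+x. indicator \<Omega> x * ennreal (((A x - v x) / \<delta>)\<^sup>2) \<partial>M)"
proof -
  have "(\<integral>\<^sup>+x. ennreal (\<phi> x * (2 * \<bar>v x\<bar> * \<bar>v x - A x\<bar>)) \<partial>M)
      \<le> (\<integral>\<^sup>+x. ennreal (a / 2) * (indicator \<Omega> x * ennreal ((v x)\<^sup>2))
        + ennreal (2 * L\<^sup>2 * \<delta>\<^sup>2 / a) * (indicator \<Omega> x * ennreal (((A x - v x) / \<delta>)\<^sup>2)) \<partial>M)"
  proof (intro nn_integral_mono)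
    fix x
    show "ennreal (\<phi> x * (2 * \<bar>v x\<bar> * \<bar>v x - A x\<bar>))
      \<le> ennreal (a / 2) * (indicator \<Omega> x * ennreal ((v x)\<^sup>2))
        + ennreal (2 * L\<^sup>2 * \<delta>\<^sup>2 / a) * (indicator \<Omega> x * ennreal (((A x - v x) / \<delta>)\<^sup>2))"
    proof (cases "x \<in> \<Omega>")
      case True
      have "\<phi> x * (2 * \<bar>v x\<bar> * \<bar>v x - A x\<bar>) \<le> a / 2 * (v x)\<^sup>2 + 2 * L\<^sup>2 / a * (v x - A x)\<^sup>2"
        using assms(5)[OF True] \<open>0 < a\<close> by (intro weighted_cross_term_le) auto
      also have "(v x - A x)\<^sup>2 = \<delta>\<^sup>2 * ((A x - v x) / \<delta>)\<^sup>2"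
        using \<open>0 < \<delta>\<close> by (simp add: power_divide power2_commute)
      finally show ?thesis
        using True \<open>0 < a\<close>
        by (simp add: ennreal_leI mult.assoc flip: ennreal_plus ennreal_mult')
    qed (simp add: assms(4))
  qed
  also have "\<dots> = ennreal (a / 2) * (\<integral>\<^sup>+x. indicator \<Omega> x * ennreal ((v x)\<^sup>2) \<partial>M)
      + ennreal (2 * L\<^sup>2 * \<delta>\<^sup>2 / a) * (\<integral>\<^sup>+x. indicator \<Omega> x * ennreal (((A x - v x) / \<delta>)\<^sup>2) \<partial>M)"
    by (simp add: nn_integral_add nn_integral_cmult)
  finally show ?thesis .
qed

section \<open>Half balls\<close>

lemma e1_Basis: "(e1 :: real^'n::{finite,wellorder}) \<in> Basis"
  by (simp add: e1_def)

lemma abs_inner_e1_le_norm: "\<bar>z \<bullet> (e1 :: real^'n::{finite,wellorder})\<bar> \<le> norm z"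
  by (rule Basis_le_norm[OF e1_Basis])

lemma inner_e1_e1 [simp]: "(e1 :: real^'n::{finite,wellorder}) \<bullet> e1 = 1"
  by (simp add: e1_def inner_axis_axis)

lemma mem_Psi_iff: "y \<in> Psi \<delta> x \<longleftrightarrow> y - x \<in> Psi \<delta> 0"
  by (simp add: Psi_def dist_norm norm_minus_commute)

lemma Psi_0: "Psi \<delta> 0 = {z. norm z < \<delta> \<and> 0 < z \<bullet> e1}"
  by (auto simp: Psi_def)

lemma Psi_subset_ball: "Psi \<delta> x \<subseteq> ball x \<delta>"
  by (auto simp: Psi_def)

lemma open_Psi: "open (Psi \<delta> x)"
proof -
  have "open (ball x \<delta> \<inter> {y. 0 < (y - x) \<bullet> e1})"
    by (intro open_Int open_ball open_Collect_less continuous_intros)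
  moreover have "Psi \<delta> x = ball x \<delta> \<inter> {y. 0 < (y - x) \<bullet> e1}"
    by (auto simp: Psi_def)
  ultimately show ?thesis
    by simp
qed

lemma Psi_borel [measurable]: "Psi \<delta> x \<in> sets borel"
  using open_Psi by (rule borel_open)

lemma inner_e1_bounds_Psi_0: "z \<in> Psi \<delta> 0 \<Longrightarrow> 0 < z \<bullet> e1 \<and> z \<bullet> e1 < \<delta>"
  using abs_inner_e1_le_norm[of z] by (auto simp: Psi_0)

lemma emeasure_Psi_finite: "emeasure lborel (Psi \<delta> x) < \<infinity>"
  by (rule emeasure_bounded_finite[OF bounded_subset[OF bounded_ball Psi_subset_ball]])

lemma emeasure_Psi:
  fixes x :: "real^'n::{finite,wellorder}"
  shows "emeasure lborel (Psi \<delta> x) = ennreal (measure lborel (Psi \<delta> (0 :: real^'n::{finite,wellorder})))"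
proof -
  have "emeasure lborel (Psi \<delta> x) = (\<integral>\<^sup>+y. indicator (Psi \<delta> 0) (y - x) \<partial>lborel)"
    by (simp add: indicator_def mem_Psi_iff[of _ \<delta> x] flip: nn_integral_indicator)
  also have "\<dots> = emeasure lborel (Psi \<delta> (0 :: real^'n::{finite,wellorder}))"
    by (simp add: nn_integral_lborel_translate)
  also have "\<dots> = ennreal (measure lborel (Psi \<delta> (0 :: real^'n::{finite,wellorder})))"
    using emeasure_Psi_finite[of \<delta> "0 :: real^'n::{finite,wellorder}"]
    by (intro emeasure_eq_ennreal_measure) auto
  finally show ?thesis .
qed

lemma measure_Psi:
  fixes x :: "real^'n::{finite,wellorder}"
  shows "measure lborel (Psi \<delta> x) = measure lborel (Psi \<delta> (0 :: real^'n::{finite,wellorder}))"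
  by (subst measure_def, subst emeasure_Psi) simp

lemma measure_Psi_pos:
  assumes "0 < \<delta>"
  shows "0 < measure lborel (Psi \<delta> (0 :: real^'n::{finite,wellorder}))"
proof -
  let ?c = "(\<delta>/2) *\<^sub>R (e1 :: real^'n::{finite,wellorder})"
  have "ball ?c (\<delta>/2) \<subseteq> Psi \<delta> 0"
  proof
    fix z assume "z \<in> ball ?c (\<delta>/2)"
    then have z: "norm (z - ?c) < \<delta>/2"
      by (simp add: dist_norm norm_minus_commute)
    have "norm z \<le> norm ?c + norm (z - ?c)"
      by (rule norm_triangle_sub)
    also have "norm ?c = \<delta>/2"
      using assms by (simp add: e1_def)
    finally have "norm z < \<delta>"
      using z by linarith
    moreover have "\<bar>z \<bullet> e1 - \<delta>/2\<bar> < \<delta>/2"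
      using abs_inner_e1_le_norm[of "z - ?c"] z by (simp add: inner_diff_left)
    then have "0 < z \<bullet> e1"
      by arith
    ultimately show "z \<in> Psi \<delta> 0"
      by (simp add: Psi_0)
  qed
  then have "emeasure lborel (ball ?c (\<delta>/2)) \<le> emeasure lborel (Psi \<delta> (0 :: real^'n::{finite,wellorder}))"
    by (rule emeasure_mono) simp
  then have "unit_ball_vol CARD('n) * (\<delta>/2) ^ CARD('n) \<le> measure lborel (Psi \<delta> (0 :: real^'n::{finite,wellorder}))"
    using assms by (simp add: emeasure_ball emeasure_Psi)
  moreover have "0 < unit_ball_vol CARD('n) * (\<delta>/2) ^ CARD('n)"
    using assms by simp
  ultimately show ?thesis
    by linarith
qed

text \<open>Reflection maps \<open>Psi \<delta> 0\<close> onto the other half of the ball.\<close>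
lemma two_measure_Psi_le:
  assumes "0 < \<delta>"
  shows "2 * measure lborel (Psi \<delta> (0 :: real^'n::{finite,wellorder})) \<le> unit_ball_vol CARD('n) * \<delta> ^ CARD('n)"
proof -
  let ?H = "Psi \<delta> (0 :: real^'n::{finite,wellorder})"
  let ?H' = "{z :: real^'n::{finite,wellorder}. norm z < \<delta> \<and> z \<bullet> e1 < 0}"
  have [measurable]: "?H' \<in> sets borel"
    by (intro borel_open open_Collect_conj open_Collect_less continuous_intros)
  have "emeasure lborel ?H' = (\<integral>\<^sup>+z. indicator ?H' z \<partial>lborel)"
    by simp
  also have "\<dots> = (\<integral>\<^sup>+z. indicator ?H (0 - z) \<partial>lborel)"
    by (intro nn_integral_cong) (simp add: Psi_0 indicator_def)
  also have "\<dots> = emeasure lborel ?H"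
    using nn_integral_lborel_reflect[of "indicator ?H" 0] by simp
  finally have "emeasure lborel ?H' = ennreal (measure lborel ?H)"
    by (simp only: emeasure_Psi)
  then have "ennreal (2 * measure lborel ?H) = emeasure lborel ?H + emeasure lborel ?H'"
    unfolding mult_2 emeasure_Psi by (simp only:) (rule ennreal_plus; simp)
  also have "\<dots> = emeasure lborel (?H \<union> ?H')"
    by (rule plus_emeasure) (auto simp: Psi_0)
  also have "\<dots> \<le> emeasure lborel (ball (0 :: real^'n::{finite,wellorder}) \<delta>)"
    by (rule emeasure_mono) (auto simp: Psi_0)
  also have "\<dots> = ennreal (unit_ball_vol CARD('n) * \<delta> ^ CARD('n))"
    using assms by (simp add: emeasure_ball)
  finally show ?thesis
    using assms by (simp add: ennreal_le_iff)
qed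

lemma nn_integral_Psi_inner_e1:
  assumes "0 < \<delta>"
  shows "(\<integral>\<^sup>+z. indicator (Psi \<delta> (0 :: real^'n::{finite,wellorder})) z * ennreal (z \<bullet> e1) \<partial>lborel)
    = ennreal (unit_ball_vol (real CARD('n) - 1) * \<delta> ^ (CARD('n) + 1) / (CARD('n) + 1))"
    (is "?I = _")
proof -
  have null: "sphere (0 :: real^'n::{finite,wellorder}) \<delta> \<in> null_sets lborel"
    using negligible_sphere[of "0 :: real^'n::{finite,wellorder}" \<delta>]
    by (auto simp: null_sets_completion_iff negligible_iff_null_sets negligible_convex_frontier)
  then have "?I = (\<integral>\<^sup>+z. indicator (cball (0 :: real^'n::{finite,wellorder}) \<delta>) z * ennreal (z \<bullet> e1) \<partial>lborel)"
    by (intro nn_integral_cong_AE, use AE_not_in[OF null] in eventually_elim)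
       (auto simp: Psi_0 indicator_def ennreal_neg)
  also have "\<dots> = ennreal (unit_ball_vol (real (DIM(real^'n::{finite,wellorder}) - 1)) * \<delta> ^ (DIM(real^'n::{finite,wellorder}) + 1) / (DIM(real^'n::{finite,wellorder}) + 1))"
    by (rule nn_integral_cball_inner_Basis[OF e1_Basis assms])
  finally show ?thesis
    by (simp add: of_nat_diff)
qed

lemma nn_integral_Psi_inner_e1_le:
  assumes "0 < \<delta>"
  shows "(\<integral>\<^sup>+z. indicator (Psi \<delta> (0 :: real^'n::{finite,wellorder})) z * ennreal (z \<bullet> e1) \<partial>lborel)
    \<le> ennreal (\<delta> * measure lborel (Psi \<delta> (0 :: real^'n::{finite,wellorder})))"
proof -
  have "(\<integral>\<^sup>+z. indicator (Psi \<delta> (0 :: real^'n::{finite,wellorder})) z * ennreal (z \<bullet> e1) \<partial>lborel)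
      \<le> (\<integral>\<^sup>+z. ennreal \<delta> * indicator (Psi \<delta> (0 :: real^'n::{finite,wellorder})) z \<partial>lborel)"
  proof (intro nn_integral_mono)
    fix z
    show "indicator (Psi \<delta> 0) z * ennreal (z \<bullet> e1) \<le> ennreal \<delta> * indicator (Psi \<delta> 0) z"
      by (cases "z \<in> Psi \<delta> 0") (auto dest: inner_e1_bounds_Psi_0 intro: ennreal_leI)
  qed
  also have "\<dots> = ennreal (\<delta> * measure lborel (Psi \<delta> (0 :: real^'n::{finite,wellorder})))"
    using assms by (simp add: nn_integral_cmult emeasure_Psi ennreal_mult')
  finally show ?thesis .
qed

lemma le_delta_if_mean_height_Psi_ge:
  assumes "0 < \<delta>"
    and "ennreal (a * measure lborel (Psi \<delta> (0 :: real^'n::{finite,wellorder})))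
      \<le> (\<integral>\<^sup>+z. indicator (Psi \<delta> (0 :: real^'n::{finite,wellorder})) z * ennreal (z \<bullet> e1) \<partial>lborel)"
  shows "a \<le> \<delta>"
proof -
  let ?s = "measure lborel (Psi \<delta> (0 :: real^'n::{finite,wellorder}))"
  have "ennreal (a * ?s) \<le> ennreal (\<delta> * ?s)"
    using assms(2) nn_integral_Psi_inner_e1_le[OF assms(1)] by (rule order_trans)
  then have "a * ?s \<le> \<delta> * ?s"
    using assms(1) by (simp add: ennreal_le_iff)
  moreover have "0 < ?s"
    by (rule measure_Psi_pos[OF assms(1)])
  ultimately show ?thesis
    by simp
qed

lemma eta_const_pos: "1 \<le> n \<Longrightarrow> 0 < eta_const n"
  by (simp add: eta_const_def)

text \<open>\<open>eta_const n * \<delta>\<close> is exactly the mean height \<open>z \<bullet> e1\<close> over the half ball \<open>Psi \<delta> 0\<close>; only the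
  lower bound is needed, for which \<open>two_measure_Psi_le\<close> suffices.\<close>
lemma eta_const_le_mean_height_Psi:
  assumes "0 < \<delta>"
  shows "ennreal (eta_const CARD('n) * \<delta> * measure lborel (Psi \<delta> (0 :: real^'n::{finite,wellorder})))
    \<le> (\<integral>\<^sup>+z. indicator (Psi \<delta> (0 :: real^'n::{finite,wellorder})) z * ennreal (z \<bullet> e1) \<partial>lborel)"
proof -
  let ?V = "unit_ball_vol (real CARD('n))" and ?V' = "unit_ball_vol (real CARD('n) - 1)"
  have "?V \<noteq> 0"
    by (metis order_less_irrefl of_nat_0_le_iff unit_ball_vol_pos)
  have "eta_const CARD('n) * \<delta> * measure lborel (Psi \<delta> (0 :: real^'n::{finite,wellorder}))
      = ?V' * \<delta> / ((real CARD('n) + 1) * ?V) * (2 * measure lborel (Psi \<delta> (0 :: real^'n::{finite,wellorder})))"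
    by (simp add: eta_const_def field_simps)
  also have "\<dots> \<le> ?V' * \<delta> / ((real CARD('n) + 1) * ?V) * (?V * \<delta> ^ CARD('n))"
    using assms two_measure_Psi_le[OF assms] by (intro mult_left_mono) auto
  also have "\<dots> = ?V' * \<delta> ^ (CARD('n) + 1) / (CARD('n) + 1)"
    by (simp add: divide_simps \<open>?V \<noteq> 0\<close>)
  finally show ?thesis
    by (simp add: nn_integral_Psi_inner_e1[OF assms] ennreal_leI)
qed

lemma Psi_subset_Un_Gamma: "x \<in> \<Omega> \<Longrightarrow> Psi \<delta> x \<subseteq> \<Omega> \<union> Gamma \<delta> \<Omega>"
  unfolding Gamma_def using closure_subset[of "\<Union>x\<in>\<Omega>. Psi \<delta> x"] by blast

section \<open>Averages over half balls\<close>

definition Psi_avg :: "real \<Rightarrow> (real^'n::{finite,wellorder} \<Rightarrow> real) \<Rightarrow> real^'n::{finite,wellorder} \<Rightarrow> real" where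
  "Psi_avg \<delta> f x = (\<integral>y. indicator (Psi \<delta> x) y * f y \<partial>lborel) / measure lborel (Psi \<delta> x)"

lemma indicator_Psi: "indicator (Psi \<delta> x) y = indicator (Psi \<delta> 0) (y - x)"
  by (simp add: indicator_def mem_Psi_iff[of y \<delta> x])

lemma Psi_avg_translate:
  "Psi_avg \<delta> f x = (\<integral>y. indicator (Psi \<delta> (0 :: real^'n::{finite,wellorder})) (y - x) * f y \<partial>lborel) / measure lborel (Psi \<delta> (0 :: real^'n::{finite,wellorder}))"
  unfolding Psi_avg_def measure_Psi[of \<delta> x] indicator_Psi[of \<delta> x] ..

lemma borel_measurable_Psi_avg [measurable]:
  assumes [measurable]: "f \<in> borel_measurable borel"
  shows "Psi_avg \<delta> f \<in> borel_measurable borel"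
  unfolding Psi_avg_translate[abs_def] by measurable

lemma abs_Psi_avg_le:
  fixes x :: "real^'n::{finite,wellorder}"
  assumes "integrable lborel f"
  shows "\<bar>Psi_avg \<delta> f x\<bar> \<le> (\<integral>y. \<bar>f y\<bar> \<partial>lborel) / measure lborel (Psi \<delta> (0 :: real^'n::{finite,wellorder}))"
proof -
  have "integrable lborel (\<lambda>y. indicator (Psi \<delta> x) y * f y)"
    using integrable_real_mult_indicator[OF _ assms, of "Psi \<delta> x"] by (simp add: mult.commute)
  then have "\<bar>\<integral>y. indicator (Psi \<delta> x) y * f y \<partial>lborel\<bar> \<le> (\<integral>y. \<bar>f y\<bar> \<partial>lborel)"
    by (rule integral_abs_bound_integral) (use assms in \<open>auto simp: indicator_def\<close>)
  then have "\<bar>\<integral>y. indicator (Psi \<delta> x) y * f y \<partial>lborel\<bar> / measure lborel (Psi \<delta> x)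
      \<le> (\<integral>y. \<bar>f y\<bar> \<partial>lborel) / measure lborel (Psi \<delta> x)"
    by (rule divide_right_mono) simp
  then show ?thesis
    by (simp add: Psi_avg_def measure_Psi[of \<delta> x])
qed

lemma square_le_Psi_avg:
  assumes "0 < \<delta>" "integrable lborel f" "integrable lborel (\<lambda>y. (f y)\<^sup>2)"
  shows "t\<^sup>2 \<le> Psi_avg \<delta> (\<lambda>y. (f y)\<^sup>2) x + 2 * \<bar>t\<bar> * \<bar>t - Psi_avg \<delta> f x\<bar>"
  using square_le_set_average[of "Psi \<delta> x" lborel f t] measure_Psi_pos[OF assms(1)] assms(2,3)
  by (simp add: Psi_avg_def measure_Psi[of \<delta> x])

lemma nn_integral_Psi_kernel:
  fixes y :: "real^'n::{finite,wellorder}"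
  assumes "c + \<delta> \<le> y \<bullet> e1"
  shows "(\<integral>\<^sup>+x. ennreal (x \<bullet> e1 - c) * indicator (Psi \<delta> 0) (y - x) \<partial>lborel)
      + (\<integral>\<^sup>+z. indicator (Psi \<delta> (0 :: real^'n::{finite,wellorder})) z * ennreal (z \<bullet> e1) \<partial>lborel)
    = ennreal ((y \<bullet> e1 - c) * measure lborel (Psi \<delta> (0 :: real^'n::{finite,wellorder})))"
proof -
  let ?H = "Psi \<delta> (0 :: real^'n::{finite,wellorder})"
  have "(\<integral>\<^sup>+x. ennreal (x \<bullet> e1 - c) * indicator ?H (y - x) \<partial>lborel)
      = (\<integral>\<^sup>+w. ennreal ((y - w) \<bullet> e1 - c) * indicator ?H w \<partial>lborel)"
    using nn_integral_lborel_reflect[of "\<lambda>w. ennreal ((y - w) \<bullet> e1 - c) * indicator ?H w" y]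
    by simp
  then have "(\<integral>\<^sup>+x. ennreal (x \<bullet> e1 - c) * indicator ?H (y - x) \<partial>lborel)
      + (\<integral>\<^sup>+z. indicator ?H z * ennreal (z \<bullet> e1) \<partial>lborel)
      = (\<integral>\<^sup>+w. ennreal ((y - w) \<bullet> e1 - c) * indicator ?H w + indicator ?H w * ennreal (w \<bullet> e1) \<partial>lborel)"
    by (simp add: nn_integral_add)
  also have "\<dots> = (\<integral>\<^sup>+w. ennreal (y \<bullet> e1 - c) * indicator ?H w \<partial>lborel)"
  proof (intro nn_integral_cong)
    fix w :: "real^'n::{finite,wellorder}"
    show "ennreal ((y - w) \<bullet> e1 - c) * indicator ?H w + indicator ?H w * ennreal (w \<bullet> e1)
        = ennreal (y \<bullet> e1 - c) * indicator ?H w"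
    proof (cases "w \<in> ?H")
      case True
      then have "0 < w \<bullet> e1" "w \<bullet> e1 < \<delta>"
        using inner_e1_bounds_Psi_0 by auto
      then show ?thesis
        using True assms by (simp add: inner_diff_left flip: ennreal_plus)
    qed simp
  qed
  also have "\<dots> = ennreal ((y \<bullet> e1 - c) * measure lborel ?H)"
    by (simp add: nn_integral_cmult emeasure_Psi ennreal_mult'')
  finally show ?thesis .
qed

lemma Psi_kernel_le:
  fixes y :: "real^'n::{finite,wellorder}"
  assumes "0 < \<delta>" "0 \<le> a" "c + \<delta> \<le> y \<bullet> e1"
    and mean: "ennreal (a * measure lborel (Psi \<delta> (0 :: real^'n::{finite,wellorder})))
      \<le> (\<integral>\<^sup>+z. indicator (Psi \<delta> (0 :: real^'n::{finite,wellorder})) z * ennreal (z \<bullet> e1) \<partial>lborel)"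
  shows "ennreal (1 / measure lborel (Psi \<delta> (0 :: real^'n::{finite,wellorder})))
      * (\<integral>\<^sup>+x. ennreal (x \<bullet> e1 - c) * indicator (Psi \<delta> 0) (y - x) \<partial>lborel)
    \<le> ennreal (y \<bullet> e1 - c - a)"
proof -
  define s where "s = measure lborel (Psi \<delta> (0 :: real^'n::{finite,wellorder}))"
  define K where "K = (\<integral>\<^sup>+x. ennreal (x \<bullet> e1 - c) * indicator (Psi \<delta> 0) (y - x) \<partial>lborel)"
  have "0 < s"
    using measure_Psi_pos[OF assms(1)] by (simp add: s_def)
  have "K + ennreal (a * s) \<le> K + (\<integral>\<^sup>+z. indicator (Psi \<delta> (0 :: real^'n::{finite,wellorder})) z * ennreal (z \<bullet> e1) \<partial>lborel)"
    using mean by (simp add: s_def add_left_mono)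
  also have "\<dots> = ennreal ((y \<bullet> e1 - c) * s)"
    using nn_integral_Psi_kernel[OF assms(3)] by (simp add: K_def s_def)
  finally have "K + ennreal (a * s) \<le> ennreal ((y \<bullet> e1 - c) * s)" .
  moreover from this obtain k where "K = ennreal k" "0 \<le> k"
    by (cases K) (auto simp: top_unique)
  moreover have "0 \<le> (y \<bullet> e1 - c) * s"
    using assms(1,3) \<open>0 < s\<close> by simp
  ultimately have "k + a * s \<le> (y \<bullet> e1 - c) * s"
    using assms(2) \<open>0 < s\<close> by (simp add: ennreal_le_iff flip: ennreal_plus)
  then have "k / s \<le> y \<bullet> e1 - c - a"
    using \<open>0 < s\<close> by (simp add: field_simps)
  then show ?thesis
    using \<open>K = ennreal k\<close> \<open>0 \<le> k\<close> \<open>0 < s\<close>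
    by (simp add: K_def s_def ennreal_leI flip: ennreal_mult')
qed

lemma nn_integral_weight_Psi_avg_square_le:
  fixes v :: "real^'n::{finite,wellorder} \<Rightarrow> real"
  assumes [measurable]: "v \<in> borel_measurable borel"
    and v2: "integrable lborel (\<lambda>y. (v y)\<^sup>2)"
    and v0: "\<And>y. y \<notin> \<Omega> \<Longrightarrow> v y = 0" and \<Omega>: "\<And>y. y \<in> \<Omega> \<Longrightarrow> c + \<delta> \<le> y \<bullet> e1"
    and "0 < \<delta>" "0 \<le> a"
    and mean: "ennreal (a * measure lborel (Psi \<delta> (0 :: real^'n::{finite,wellorder})))
      \<le> (\<integral>\<^sup>+z. indicator (Psi \<delta> (0 :: real^'n::{finite,wellorder})) z * ennreal (z \<bullet> e1) \<partial>lborel)"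
  shows "(\<integral>\<^sup>+x. ennreal (x \<bullet> e1 - c) * ennreal (Psi_avg \<delta> (\<lambda>y. (v y)\<^sup>2) x) \<partial>lborel)
    \<le> (\<integral>\<^sup>+y. ennreal ((v y)\<^sup>2) * ennreal (y \<bullet> e1 - c - a) \<partial>lborel)"
proof -
  define s where "s = measure lborel (Psi \<delta> (0 :: real^'n::{finite,wellorder}))"
  define F where "F x y = ennreal (x \<bullet> e1 - c) * (indicator (Psi \<delta> 0) (y - x) * ennreal ((v y)\<^sup>2))"
    for x y :: "real^'n::{finite,wellorder}"
  have [measurable]: "case_prod F \<in> borel_measurable (lborel \<Otimes>\<^sub>M lborel)"
    unfolding F_def by measurable
  have "0 < s"
    using measure_Psi_pos[OF \<open>0 < \<delta>\<close>] by (simp add: s_def)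
  have avg: "ennreal (Psi_avg \<delta> (\<lambda>y. (v y)\<^sup>2) x)
      = ennreal (1 / s) * (\<integral>\<^sup>+y. indicator (Psi \<delta> 0) (y - x) * ennreal ((v y)\<^sup>2) \<partial>lborel)" for x
  proof -
    have "integrable lborel (\<lambda>y. indicator (Psi \<delta> x) y * (v y)\<^sup>2)"
      using integrable_real_mult_indicator[OF _ v2, of "Psi \<delta> x"] by (simp add: mult.commute)
    then have "integrable lborel (\<lambda>y. indicator (Psi \<delta> 0) (y - x) * (v y)\<^sup>2)"
      unfolding indicator_Psi[of \<delta> x] .
    then have "(\<integral>\<^sup>+y. indicator (Psi \<delta> 0) (y - x) * ennreal ((v y)\<^sup>2) \<partial>lborel)
        = ennreal (\<integral>y. indicator (Psi \<delta> 0) (y - x) * (v y)\<^sup>2 \<partial>lborel)"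
      by (subst nn_integral_eq_integral[symmetric])
         (auto intro!: nn_integral_cong simp: indicator_def)
    then show ?thesis
      using \<open>0 < s\<close> by (simp add: Psi_avg_translate s_def divide_inverse ennreal_mult' mult.commute)
  qed
  have "(\<integral>\<^sup>+x. ennreal (x \<bullet> e1 - c) * ennreal (Psi_avg \<delta> (\<lambda>y. (v y)\<^sup>2) x) \<partial>lborel)
      = (\<integral>\<^sup>+x. ennreal (1 / s) * (\<integral>\<^sup>+y. F x y \<partial>lborel) \<partial>lborel)"
    unfolding avg F_def by (intro nn_integral_cong) (simp add: nn_integral_cmult mult_ac)
  also have "\<dots> = ennreal (1 / s) * (\<integral>\<^sup>+x. \<integral>\<^sup>+y. F x y \<partial>lborel \<partial>lborel)"
    by (rule nn_integral_cmult) measurable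
  also have "(\<integral>\<^sup>+x. \<integral>\<^sup>+y. F x y \<partial>lborel \<partial>lborel) = (\<integral>\<^sup>+y. \<integral>\<^sup>+x. F x y \<partial>lborel \<partial>lborel)"
    by (rule lborel_pair.Fubini'[symmetric]) measurable
  also have "\<dots> = (\<integral>\<^sup>+y. ennreal ((v y)\<^sup>2)
      * (\<integral>\<^sup>+x. ennreal (x \<bullet> e1 - c) * indicator (Psi \<delta> 0) (y - x) \<partial>lborel) \<partial>lborel)"
    unfolding F_def by (intro nn_integral_cong) (simp add: nn_integral_cmult[symmetric] mult_ac)
  also have "ennreal (1 / s) * \<dots> = (\<integral>\<^sup>+y. ennreal ((v y)\<^sup>2) * (ennreal (1 / s)
      * (\<integral>\<^sup>+x. ennreal (x \<bullet> e1 - c) * indicator (Psi \<delta> 0) (y - x) \<partial>lborel)) \<partial>lborel)"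
    by (subst nn_integral_cmult[symmetric]) (auto simp: mult_ac)
  also have "\<dots> \<le> (\<integral>\<^sup>+y. ennreal ((v y)\<^sup>2) * ennreal (y \<bullet> e1 - c - a) \<partial>lborel)"
  proof (intro nn_integral_mono)
    fix y
    show "ennreal ((v y)\<^sup>2) * (ennreal (1 / s)
        * (\<integral>\<^sup>+x. ennreal (x \<bullet> e1 - c) * indicator (Psi \<delta> 0) (y - x) \<partial>lborel))
      \<le> ennreal ((v y)\<^sup>2) * ennreal (y \<bullet> e1 - c - a)"
      using Psi_kernel_le[OF \<open>0 < \<delta>\<close> \<open>0 \<le> a\<close> \<Omega> mean, of y] v0[of y]
      by (cases "y \<in> \<Omega>") (auto simp: s_def intro: mult_left_mono)
  qed
  finally show ?thesis .
qed

lemma nn_integral_weighted_square_le_Psi_avg: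
  fixes v \<phi> :: "real^'n::{finite,wellorder} \<Rightarrow> real"
  assumes [measurable]: "v \<in> borel_measurable borel" "\<phi> \<in> borel_measurable borel"
    and "0 < \<delta>" "integrable lborel v" "integrable lborel (\<lambda>y. (v y)\<^sup>2)"
  shows "(\<integral>\<^sup>+x. ennreal (\<phi> x) * ennreal ((v x)\<^sup>2) \<partial>lborel)
    \<le> (\<integral>\<^sup>+x. ennreal (\<phi> x) * ennreal (Psi_avg \<delta> (\<lambda>y. (v y)\<^sup>2) x) \<partial>lborel)
      + (\<integral>\<^sup>+x. ennreal (\<phi> x * (2 * \<bar>v x\<bar> * \<bar>v x - Psi_avg \<delta> v x\<bar>)) \<partial>lborel)"
proof -
  have "(\<integral>\<^sup>+x. ennreal (\<phi> x) * ennreal ((v x)\<^sup>2) \<partial>lborel)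
      \<le> (\<integral>\<^sup>+x. ennreal (\<phi> x) * ennreal (Psi_avg \<delta> (\<lambda>y. (v y)\<^sup>2) x)
        + ennreal (\<phi> x * (2 * \<bar>v x\<bar> * \<bar>v x - Psi_avg \<delta> v x\<bar>)) \<partial>lborel)"
  proof (intro nn_integral_mono)
    fix x
    have "0 \<le> Psi_avg \<delta> (\<lambda>y. (v y)\<^sup>2) x"
      by (simp add: Psi_avg_def integral_nonneg_AE)
    then have "ennreal ((v x)\<^sup>2)
        \<le> ennreal (Psi_avg \<delta> (\<lambda>y. (v y)\<^sup>2) x) + ennreal (2 * \<bar>v x\<bar> * \<bar>v x - Psi_avg \<delta> v x\<bar>)"
      using square_le_Psi_avg[OF assms(3-5), of "v x" x] by (simp add: ennreal_leI flip: ennreal_plus)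
    then have "ennreal (\<phi> x) * ennreal ((v x)\<^sup>2) \<le> ennreal (\<phi> x)
        * (ennreal (Psi_avg \<delta> (\<lambda>y. (v y)\<^sup>2) x) + ennreal (2 * \<bar>v x\<bar> * \<bar>v x - Psi_avg \<delta> v x\<bar>))"
      by (rule mult_left_mono) simp
    then show "ennreal (\<phi> x) * ennreal ((v x)\<^sup>2) \<le> ennreal (\<phi> x) * ennreal (Psi_avg \<delta> (\<lambda>y. (v y)\<^sup>2) x)
        + ennreal (\<phi> x * (2 * \<bar>v x\<bar> * \<bar>v x - Psi_avg \<delta> v x\<bar>))"
      by (simp add: distrib_left ennreal_mult'')
  qed
  also have "\<dots> = (\<integral>\<^sup>+x. ennreal (\<phi> x) * ennreal (Psi_avg \<delta> (\<lambda>y. (v y)\<^sup>2) x) \<partial>lborel)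
      + (\<integral>\<^sup>+x. ennreal (\<phi> x * (2 * \<bar>v x\<bar> * \<bar>v x - Psi_avg \<delta> v x\<bar>)) \<partial>lborel)"
    by (rule nn_integral_add) auto
  finally show ?thesis .
qed

lemma Psi_difference_quotient_eq:
  fixes x :: "real^'n::{finite,wellorder}"
  assumes "0 < \<delta>" "Psi \<delta> x \<subseteq> S" "set_integrable lebesgue S u"
    and uv: "AE y in lebesgue. y \<in> S \<longrightarrow> u y = v y"
    and [measurable]: "v \<in> borel_measurable borel" and "integrable lborel v"
  shows "(1 / measure lebesgue (Psi \<delta> x)) * (\<integral>y\<in>Psi \<delta> x. (u y - u x) / \<delta> \<partial>lebesgue)
    = (Psi_avg \<delta> v x - u x) / \<delta>"
proof -
  let ?P = "Psi \<delta> x"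
  define I where "I = (\<integral>y. indicator ?P y * v y \<partial>lborel)"
  define m where "m = measure lborel ?P"
  define w where "w y = indicator S y * u y" for y
  have w: "w \<in> borel_measurable lebesgue"
    using assms(3) by (simp add: w_def[abs_def] set_integrable_def borel_measurable_integrable)
  have [measurable]: "v \<in> borel_measurable lebesgue" "?P \<in> sets lebesgue"
    by (simp_all add: measurable_completion)
  have "(\<integral>y\<in>?P. (u y - u x) / \<delta> \<partial>lebesgue)
      = (\<integral>y. indicator ?P y * ((w y - u x) / \<delta>) \<partial>lebesgue)"
    unfolding set_lebesgue_integral_def using assms(2)
    by (intro Bochner_Integration.integral_cong) (auto simp: w_def indicator_def)
  also have "\<dots> = (\<integral>y. indicator ?P y * ((v y - u x) / \<delta>) \<partial>lebesgue)"
  proof (rule integral_cong_AE)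
    show "AE y in lebesgue. indicator ?P y * ((w y - u x) / \<delta>)
        = indicator ?P y * ((v y - u x) / \<delta>)"
      using uv by eventually_elim (use assms(2) in \<open>auto simp: w_def indicator_def\<close>)
  qed (intro borel_measurable_times borel_measurable_divide borel_measurable_diff
        borel_measurable_const borel_measurable_indicator w; simp)+
  also have "\<dots> = (\<integral>y. indicator ?P y * ((v y - u x) / \<delta>) \<partial>lborel)"
    by (rule integral_completion) measurable
  also have "\<dots> = I / \<delta> - u x / \<delta> * m"
  proof -
    have "integrable lborel (\<lambda>y. indicator ?P y * v y)"
      using integrable_real_mult_indicator[OF _ assms(6), of ?P] by (simp add: mult.commute)
    moreover have "integrable lborel (\<lambda>y. indicator ?P y :: real)"
      using emeasure_Psi_finite[of \<delta> x] by simp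
    moreover have "(\<lambda>y. indicator ?P y * ((v y - u x) / \<delta>))
        = (\<lambda>y. indicator ?P y * v y / \<delta> - u x / \<delta> * indicator ?P y)"
      by (simp add: fun_eq_iff diff_divide_distrib right_diff_distrib)
    ultimately show ?thesis
      by (simp add: I_def m_def)
  qed
  finally have "(\<integral>y\<in>?P. (u y - u x) / \<delta> \<partial>lebesgue) = I / \<delta> - u x / \<delta> * m" .
  moreover have "measure lebesgue ?P = m" "Psi_avg \<delta> v x = I / m"
    by (simp_all add: m_def I_def Psi_avg_def)
  moreover have "0 < m"
    using measure_Psi_pos[OF assms(1)] by (simp add: m_def measure_Psi[of \<delta> x])
  ultimately show ?thesis
    using assms(1) by (simp add: field_simps)
qed

section \<open>The weighted energy estimate\<close>

lemma nn_integral_square_le_Psi_avg_diff_square_integrable: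
  fixes v :: "real^'n::{finite,wellorder} \<Rightarrow> real" and \<Omega> :: "(real^'n::{finite,wellorder}) set"
  assumes [measurable]: "v \<in> borel_measurable borel" "\<Omega> \<in> sets borel"
    and v1: "integrable lborel v" and v2: "integrable lborel (\<lambda>y. (v y)\<^sup>2)"
    and v0: "\<And>x. x \<notin> \<Omega> \<Longrightarrow> v x = 0"
    and slab: "\<And>y. y \<in> \<Omega> \<Longrightarrow> c + \<delta> \<le> y \<bullet> e1 \<and> y \<bullet> e1 \<le> c + L"
    and "0 < \<delta>" "0 < a"
    and mean: "ennreal (a * measure lborel (Psi \<delta> (0 :: real^'n::{finite,wellorder})))
      \<le> (\<integral>\<^sup>+z. indicator (Psi \<delta> (0 :: real^'n::{finite,wellorder})) z * ennreal (z \<bullet> e1) \<partial>lborel)"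
    and G_fin: "(\<integral>\<^sup>+x. indicator \<Omega> x * ennreal (((Psi_avg \<delta> v x - v x) / \<delta>)\<^sup>2) \<partial>lborel) < \<infinity>"
  shows "(\<integral>\<^sup>+x. indicator \<Omega> x * ennreal ((v x)\<^sup>2) \<partial>lborel)
    \<le> ennreal (4 * L\<^sup>2 * \<delta>\<^sup>2 / a\<^sup>2)
      * (\<integral>\<^sup>+x. indicator \<Omega> x * ennreal (((Psi_avg \<delta> v x - v x) / \<delta>)\<^sup>2) \<partial>lborel)"
proof -
  define A where "A = Psi_avg \<delta> v"
  define F where "F = (\<integral>\<^sup>+x. indicator \<Omega> x * ennreal ((v x)\<^sup>2) \<partial>lborel)"
  define G where "G = (\<integral>\<^sup>+x. indicator \<Omega> x * ennreal (((A x - v x) / \<delta>)\<^sup>2) \<partial>lborel)"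
  define T where "T = (\<integral>\<^sup>+x. ennreal ((v x)\<^sup>2) * ennreal (x \<bullet> e1 - c - a) \<partial>lborel)"
  have [measurable]: "A \<in> borel_measurable borel"
    by (simp add: A_def)
  have weight: "\<delta> \<le> x \<bullet> e1 - c" "0 \<le> x \<bullet> e1 - c" "x \<bullet> e1 - c \<le> L" if "x \<in> \<Omega>" for x
    using slab[OF that] \<open>0 < \<delta>\<close> by auto
  have "a \<le> \<delta>"
    using le_delta_if_mean_height_Psi_ge[OF \<open>0 < \<delta>\<close> mean] .
  have "F \<le> (\<integral>\<^sup>+y. ennreal (norm ((v y)\<^sup>2)) \<partial>lborel)"
    unfolding F_def by (intro nn_integral_mono) (simp add: indicator_def)
  then have "F < \<infinity>"
    using v2 by (auto simp: integrable_iff_bounded)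
  have "(\<integral>\<^sup>+x. ennreal (x \<bullet> e1 - c) * ennreal ((v x)\<^sup>2) \<partial>lborel)
      \<le> (\<integral>\<^sup>+x. ennreal (x \<bullet> e1 - c) * ennreal (Psi_avg \<delta> (\<lambda>y. (v y)\<^sup>2) x) \<partial>lborel)
        + (\<integral>\<^sup>+x. ennreal ((x \<bullet> e1 - c) * (2 * \<bar>v x\<bar> * \<bar>v x - A x\<bar>)) \<partial>lborel)"
    unfolding A_def
    by (rule nn_integral_weighted_square_le_Psi_avg) (measurable, measurable, fact+)
  also have "\<dots> \<le> T + (ennreal (a / 2) * F + ennreal (2 * L\<^sup>2 * \<delta>\<^sup>2 / a) * G)"
  proof (rule add_mono)
    show "(\<integral>\<^sup>+x. ennreal (x \<bullet> e1 - c) * ennreal (Psi_avg \<delta> (\<lambda>y. (v y)\<^sup>2) x) \<partial>lborel) \<le> T"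
      unfolding T_def
      by (rule nn_integral_weight_Psi_avg_square_le[OF _ v2 v0 _ \<open>0 < \<delta>\<close> _ mean])
         (use slab \<open>0 < a\<close> in auto)
    show "(\<integral>\<^sup>+x. ennreal ((x \<bullet> e1 - c) * (2 * \<bar>v x\<bar> * \<bar>v x - A x\<bar>)) \<partial>lborel)
        \<le> ennreal (a / 2) * F + ennreal (2 * L\<^sup>2 * \<delta>\<^sup>2 / a) * G"
      unfolding F_def G_def
      by (rule nn_integral_cross_term_le) (use v0 weight \<open>0 < a\<close> \<open>0 < \<delta>\<close> in auto)
  qed
  finally have "(\<integral>\<^sup>+x. ennreal (x \<bullet> e1 - c) * ennreal ((v x)\<^sup>2) \<partial>lborel)
      \<le> T + (ennreal (a / 2) * F + ennreal (2 * L\<^sup>2 * \<delta>\<^sup>2 / a) * G)" .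
  moreover have "(\<integral>\<^sup>+x. ennreal (x \<bullet> e1 - c) * ennreal ((v x)\<^sup>2) \<partial>lborel) = T + ennreal a * F"
    unfolding T_def F_def
    by (rule nn_integral_weight_split) (use v0 weight \<open>a \<le> \<delta>\<close> \<open>0 < a\<close> in \<open>auto intro: order.trans[OF \<open>a \<le> \<delta>\<close>]\<close>)
  moreover have "T < \<infinity>"
  proof -
    have "T \<le> ennreal L * F"
      unfolding T_def F_def
      by (rule nn_integral_square_weight_le) (use v0 weight(3) \<open>0 < a\<close> in \<open>force+\<close>)
    then show ?thesis
      using \<open>F < \<infinity>\<close> by (simp add: ennreal_mult_less_top le_less_trans)
  qed
  ultimately have "F \<le> ennreal (2 * (2 * L\<^sup>2 * \<delta>\<^sup>2 / a) / a) * G"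
    using \<open>F < \<infinity>\<close> G_fin \<open>0 < a\<close> by (intro ennreal_absorb_half[of T]) (simp_all add: G_def A_def)
  also have "2 * (2 * L\<^sup>2 * \<delta>\<^sup>2 / a) / a = 4 * L\<^sup>2 * \<delta>\<^sup>2 / a\<^sup>2"
    by (simp add: power2_eq_square)
  finally show ?thesis
    by (simp add: F_def G_def A_def)
qed

lemma nn_integral_square_le_Psi_avg_diff:
  fixes v :: "real^'n::{finite,wellorder} \<Rightarrow> real" and \<Omega> :: "(real^'n::{finite,wellorder}) set"
  assumes [measurable]: "v \<in> borel_measurable borel" "\<Omega> \<in> sets borel"
    and v1: "integrable lborel v" and v0: "\<And>x. x \<notin> \<Omega> \<Longrightarrow> v x = 0"
    and \<Omega>_fin: "emeasure lborel \<Omega> < \<infinity>"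
    and slab: "\<And>y. y \<in> \<Omega> \<Longrightarrow> c + \<delta> \<le> y \<bullet> e1 \<and> y \<bullet> e1 \<le> c + L"
    and "0 < \<delta>" "0 < a" "0 < L"
    and mean: "ennreal (a * measure lborel (Psi \<delta> (0 :: real^'n::{finite,wellorder})))
      \<le> (\<integral>\<^sup>+z. indicator (Psi \<delta> (0 :: real^'n::{finite,wellorder})) z * ennreal (z \<bullet> e1) \<partial>lborel)"
  shows "(\<integral>\<^sup>+x. indicator \<Omega> x * ennreal ((v x)\<^sup>2) \<partial>lborel)
    \<le> ennreal (4 * L\<^sup>2 * \<delta>\<^sup>2 / a\<^sup>2)
      * (\<integral>\<^sup>+x. indicator \<Omega> x * ennreal (((Psi_avg \<delta> v x - v x) / \<delta>)\<^sup>2) \<partial>lborel)"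
    (is "?F \<le> ennreal ?C * ?G")
proof (cases "?G < \<infinity>")
  case True
  have "?F < \<infinity>"
    using \<Omega>_fin abs_Psi_avg_le[OF v1] \<open>0 < \<delta>\<close> True
    by (intro nn_integral_square_finite[of v lborel "Psi_avg \<delta> v" \<Omega>]) simp_all
  moreover have "(\<integral>\<^sup>+y. ennreal (norm ((v y)\<^sup>2)) \<partial>lborel) = ?F"
    by (intro nn_integral_cong) (simp add: indicator_def v0)
  ultimately have "integrable lborel (\<lambda>y. (v y)\<^sup>2)"
    by (intro integrableI_bounded) auto
  then show ?thesis
    using nn_integral_square_le_Psi_avg_diff_square_integrable[OF assms(1,2) v1 _ v0 slab _ _ mean True]
      \<open>0 < \<delta>\<close> \<open>0 < a\<close> by blast
next
  case False
  moreover have "ennreal ?C \<noteq> 0"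
    using \<open>0 < L\<close> \<open>0 < \<delta>\<close> \<open>0 < a\<close> by simp
  ultimately show ?thesis
    by (simp add: less_top[symmetric])
qed

theorem mainTheorem12:
  fixes \<Omega> :: "(real ^ ('n::{finite,wellorder})) set"
    and u :: "real ^ ('n::{finite,wellorder}) \<Rightarrow> real"
    and \<delta> :: real
  assumes "open \<Omega>" and "bounded \<Omega>" and "\<Omega> \<noteq> {}"
    and "0 < \<delta>" and "\<delta> \<le> 1"
    and "set_integrable lebesgue (\<Omega> \<union> Gamma \<delta> \<Omega>) u"
    and "AE y in lebesgue. y \<in> Gamma \<delta> \<Omega> \<longrightarrow> u y = 0"
  shows "(\<integral>\<^sup>+ x\<in>\<Omega>. ennreal ((u x)\<^sup>2) \<partial>lebesgue)
    \<le> ennreal (4 * (1 + diameter \<Omega>) ^ 3 / (eta_const CARD('n))\<^sup>2) *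
       (\<integral>\<^sup>+ x\<in>\<Omega>. ennreal ((\<bar>(1 / measure lebesgue (Psi \<delta> x)) *
            (\<integral>y\<in>Psi \<delta> x. (u y - u x) / \<delta> \<partial>lebesgue)\<bar>)\<^sup>2) \<partial>lebesgue)"
proof -
  have \<Omega> [measurable]: "\<Omega> \<in> sets borel"
    using \<open>open \<Omega>\<close> by (rule borel_open)
  obtain v where v: "v \<in> borel_measurable borel" and v0: "\<And>x. x \<notin> \<Omega> \<Longrightarrow> v x = 0"
    and v1: "integrable lborel v" and uv: "AE x in lebesgue. x \<in> \<Omega> \<union> Gamma \<delta> \<Omega> \<longrightarrow> u x = v x"
    by (rule set_integrable_Borel_representative[OF \<Omega> _ assms(6,7)]) (auto simp: Gamma_def)
  obtain m where slab: "\<And>y. y \<in> \<Omega> \<Longrightarrow> m \<le> y \<bullet> e1 \<and> y \<bullet> e1 \<le> m + diameter \<Omega>"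
    by (rule bounded_inner_slab[OF \<open>bounded \<Omega>\<close> \<open>\<Omega> \<noteq> {}\<close>, of e1]) (auto simp: e1_def)
  have quotient: "(\<bar>(1 / measure lebesgue (Psi \<delta> x)) * (\<integral>y\<in>Psi \<delta> x. (u y - u x) / \<delta> \<partial>lebesgue)\<bar>)\<^sup>2
      = ((Psi_avg \<delta> v x - v x) / \<delta>)\<^sup>2" if "x \<in> \<Omega>" "u x = v x" for x
    using Psi_difference_quotient_eq[OF \<open>0 < \<delta>\<close> Psi_subset_Un_Gamma[OF that(1)] assms(6) uv v v1] that(2)
    by (simp add: power_divide)
  define \<eta> where "\<eta> = eta_const CARD('n)"
  define L where "L = 1 + diameter \<Omega>"
  have "0 < \<eta>" "1 \<le> L"
    using diameter_ge_0[OF \<open>bounded \<Omega>\<close>] by (simp_all add: \<eta>_def L_def eta_const_pos)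
  have mean: "ennreal (\<eta> * \<delta> * measure lborel (Psi \<delta> (0 :: real^'n::{finite,wellorder})))
      \<le> (\<integral>\<^sup>+z. indicator (Psi \<delta> (0 :: real^'n::{finite,wellorder})) z * ennreal (z \<bullet> e1) \<partial>lborel)"
    unfolding \<eta>_def by (rule eta_const_le_mean_height_Psi[OF \<open>0 < \<delta>\<close>])
  have energy: "(\<integral>\<^sup>+x. indicator \<Omega> x * ennreal ((v x)\<^sup>2) \<partial>lborel)
      \<le> ennreal (4 * L\<^sup>2 * \<delta>\<^sup>2 / (\<eta> * \<delta>)\<^sup>2)
        * (\<integral>\<^sup>+x. indicator \<Omega> x * ennreal (((Psi_avg \<delta> v x - v x) / \<delta>)\<^sup>2) \<partial>lborel)"
    using slab \<open>0 < \<delta>\<close> \<open>\<delta> \<le> 1\<close> \<open>0 < \<eta>\<close> \<open>1 \<le> L\<close>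
    by (intro nn_integral_square_le_Psi_avg_diff[where c = "m - \<delta>", OF v \<Omega> v1 v0
          emeasure_bounded_finite[OF \<open>bounded \<Omega>\<close>] _ \<open>0 < \<delta>\<close> _ _ mean])
       (force simp: L_def)+
  have "4 * L\<^sup>2 * \<delta>\<^sup>2 / (\<eta> * \<delta>)\<^sup>2 \<le> 4 * L ^ 3 / \<eta>\<^sup>2"
    using \<open>0 < \<delta>\<close> \<open>1 \<le> L\<close> by (simp add: power_mult_distrib power2_eq_square power3_eq_cube divide_right_mono)
  with energy have "(\<integral>\<^sup>+x. indicator \<Omega> x * ennreal ((v x)\<^sup>2) \<partial>lborel)
      \<le> ennreal (4 * L ^ 3 / \<eta>\<^sup>2)
        * (\<integral>\<^sup>+x. indicator \<Omega> x * ennreal (((Psi_avg \<delta> v x - v x) / \<delta>)\<^sup>2) \<partial>lborel)"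
    by (elim order_trans) (intro mult_right_mono ennreal_leI; simp)
  moreover have "(\<integral>\<^sup>+x\<in>\<Omega>. ennreal ((u x)\<^sup>2) \<partial>lebesgue) = (\<integral>\<^sup>+x. indicator \<Omega> x * ennreal ((v x)\<^sup>2) \<partial>lborel)"
    using uv by (intro nn_integral_lebesgue_on_eq_lborel) (auto elim!: eventually_mono)
  moreover have "(\<integral>\<^sup>+ x\<in>\<Omega>. ennreal ((\<bar>(1 / measure lebesgue (Psi \<delta> x)) *
            (\<integral>y\<in>Psi \<delta> x. (u y - u x) / \<delta> \<partial>lebesgue)\<bar>)\<^sup>2) \<partial>lebesgue)
      = (\<integral>\<^sup>+x. indicator \<Omega> x * ennreal (((Psi_avg \<delta> v x - v x) / \<delta>)\<^sup>2) \<partial>lborel)"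
    using uv
    by (intro nn_integral_lebesgue_on_eq_lborel)
       (rule eventually_mono[OF uv], intro impI arg_cong[where f = ennreal] quotient, auto)
  ultimately show ?thesis
    by (simp add: \<eta>_def L_def)
qed

end
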